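(* Let $R$ be a noetherian integral domain, $n\ge1$, $R[n]=R[t]/(t^n)$, and $M$ an $R[n]$-module of finite type. Then $M$ is torsion free if and only if it is isomorphic to a submodule of a free $R[n]$-module.
   Context: An element $u=\sum_{i=0}^{n-1}u_it^i\in R[n]$ ($u_i\in R$) is a non-zero-divisor iff $u_0\ne0$; let $S_n$ be the set of non-zero-divisors. The torsion submodule $T(M)$ of $M$ is the set of $m\in M$ such that $\alpha m=0$ for some $\alpha\in S_n$; $M$ is torsion free if $T(M)=0$. *)

theory Defs
  imports "HOL-Algebra.Algebra"
begin

definition trunc_poly_ring :: "('a, 'r) ring_scheme \<Rightarrow> nat \<Rightarrow> (nat \<Rightarrow> 'a) set ring" where
  "trunc_poly_ring R n = UP R Quot (PIdl\<^bsub>UP R\<^esub> (monom (UP R) \<one>\<^bsub>R\<^esub> n))"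

definition non_zero_divisors :: "('a, 'r) ring_scheme \<Rightarrow> 'a set" where
  "non_zero_divisors A = {u \<in> carrier A. \<forall>v \<in> carrier A. u \<otimes>\<^bsub>A\<^esub> v = \<zero>\<^bsub>A\<^esub> \<longrightarrow> v = \<zero>\<^bsub>A\<^esub>}"

definition torsion :: "('a, 'r) ring_scheme \<Rightarrow> ('a, 'm, 'x) module_scheme \<Rightarrow> 'm set" where
  "torsion A M = {m \<in> carrier M. \<exists>\<alpha> \<in> non_zero_divisors A. \<alpha> \<odot>\<^bsub>M\<^esub> m = \<zero>\<^bsub>M\<^esub>}"

definition torsion_free :: "('a, 'r) ring_scheme \<Rightarrow> ('a, 'm, 'x) module_scheme \<Rightarrow> bool" where
  "torsion_free A M \<longleftrightarrow> torsion A M = {\<zero>\<^bsub>M\<^esub>}"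

definition finitely_generated_module :: "('a, 'r) ring_scheme \<Rightarrow> ('a, 'm, 'x) module_scheme \<Rightarrow> bool" where
  "finitely_generated_module A M \<longleftrightarrow>
     (\<exists>S. finite S \<and> S \<subseteq> carrier M \<and>
        (\<forall>x \<in> carrier M. \<exists>c \<in> S \<rightarrow> carrier A. x = (\<Oplus>\<^bsub>M\<^esub> s \<in> S. c s \<odot>\<^bsub>M\<^esub> s)))"

definition module_hom :: "('a, 'r) ring_scheme \<Rightarrow> ('a, 'm, 'x) module_scheme \<Rightarrow> ('a, 'n, 'y) module_scheme \<Rightarrow> ('m \<Rightarrow> 'n) set" where
  "module_hom A M N = {h. h \<in> carrier M \<rightarrow> carrier N \<and>
     (\<forall>x \<in> carrier M. \<forall>y \<in> carrier M. h (x \<oplus>\<^bsub>M\<^esub> y) = h x \<oplus>\<^bsub>N\<^esub> h y) \<and>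
     (\<forall>a \<in> carrier A. \<forall>x \<in> carrier M. h (a \<odot>\<^bsub>M\<^esub> x) = a \<odot>\<^bsub>N\<^esub> h x)}"

text \<open>The free A-module with basis indexed by I (finitely supported functions I \<rightarrow> A).
  Every free A-module is isomorphic to one of these.  The multiplicative fields are irrelevant.\<close>
definition free_module :: "('a, 'r) ring_scheme \<Rightarrow> 'i set \<Rightarrow> ('a, 'i \<Rightarrow> 'a) module" where
  "free_module A I = \<lparr>
     carrier = {f \<in> I \<rightarrow>\<^sub>E carrier A. finite {i \<in> I. f i \<noteq> \<zero>\<^bsub>A\<^esub>}},
     monoid.mult = (\<lambda>f g. undefined),
     one = undefined,
     ring.zero = (\<lambda>i \<in> I. \<zero>\<^bsub>A\<^esub>),
     ring.add = (\<lambda>f g. \<lambda>i \<in> I. f i \<oplus>\<^bsub>A\<^esub> g i),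
     module.smult = (\<lambda>a f. \<lambda>i \<in> I. a \<otimes>\<^bsub>A\<^esub> f i) \<rparr>"

definition iso_to_submodule :: "('a, 'r) ring_scheme \<Rightarrow> ('a, 'm, 'x) module_scheme \<Rightarrow> ('a, 'n, 'y) module_scheme \<Rightarrow> bool" where
  "iso_to_submodule A M F \<longleftrightarrow>
     (\<exists>N h. submodule N A F \<and> h \<in> module_hom A M F \<and> bij_betw h (carrier M) N)"

end

theory Submission
  imports Defs
begin

(* Restricting scalars along R -> R[n] makes M a finitely generated torsion-free R-module.
   Such a module is separated by finitely many R-linear forms M -> R: add the generators one
   at a time; a generator that is R-dependent on the previous ones only rescales the old forms,
   an independent one contributes its coordinate.  An R-linear form f lifts to the R[n]-linear
   map m |-> sum_{i<n} f (t^(n-1-i) m) t^i, whose coefficient of t^(n-1) is f m, so the lifts of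
   the separating forms embed M into a free R[n]-module.  Conversely, non-zero-divisors act
   injectively on free modules, hence on their submodules. *)

lemma (in abelian_group) minus_eq_minus_if_add_eq:
  assumes "a \<in> carrier G" "b \<in> carrier G" "y \<in> carrier G" "y' \<in> carrier G"
    and "a \<oplus> y = b \<oplus> y'"
  shows "a \<ominus> b = y' \<ominus> y"
proof -
  have "a = a \<oplus> y \<oplus> \<ominus> y"
    using assms(1,3) by (simp add: a_assoc r_neg)
  also have "\<dots> = b \<oplus> y' \<oplus> \<ominus> y"
    by (simp only: assms(5))
  finally have "a \<oplus> \<ominus> b = b \<oplus> y' \<oplus> \<ominus> y \<oplus> \<ominus> b"
    by simp
  also have "\<dots> = y' \<oplus> \<ominus> y"
    using assms(2-4) by (metis a_assoc a_comm a_inv_closed a_closed r_neg1)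
  finally show ?thesis
    by (simp only: a_minus_def)
qed

lemma (in abelian_monoid) finsum_mem_if_add_closed:
  assumes V: "V \<subseteq> carrier G" "\<zero> \<in> V" "\<And>u v. u \<in> V \<Longrightarrow> v \<in> V \<Longrightarrow> u \<oplus> v \<in> V"
  shows "finite F \<Longrightarrow> f \<in> F \<rightarrow> V \<Longrightarrow> finsum G f F \<in> V"
proof (induction F rule: finite_induct)
  case (insert x F)
  then have "f \<in> insert x F \<rightarrow> carrier G"
    using V(1) by blast
  with insert V(3) show ?case
    by (simp add: finsum_insert Pi_iff)
qed (simp add: V(2))

lemma (in abelian_monoid) finsum_lessThan_shift:
  assumes "f \<in> UNIV \<rightarrow> carrier G" "f 0 = \<zero>" "f n = \<zero>"
  shows "(\<Oplus>i\<in>{..<n}. f (Suc i)) = (\<Oplus>i\<in>{..<n}. f i)"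
proof (cases n)
  case (Suc k)
  have "(\<Oplus>i\<in>{..k}. f (Suc i)) = (\<Oplus>i\<in>{..Suc k}. f i)"
    using assms finsum_Suc2[of f k] by (simp add: Pi_iff)
  also have "\<dots> = (\<Oplus>i\<in>{..k}. f i)"
    using assms Suc by (simp add: Pi_iff)
  finally show ?thesis
    using Suc by (simp add: lessThan_Suc_atMost)
qed simp

lemma (in domain) non_zero_divisorsI: "r \<in> carrier R \<Longrightarrow> r \<noteq> \<zero> \<Longrightarrow> r \<in> non_zero_divisors R"
  by (auto simp: non_zero_divisors_def integral_iff)

section \<open>Free modules, torsion and embeddings\<close>

lemma free_module_carrier:
  "carrier (free_module A I) = {f \<in> I \<rightarrow>\<^sub>E carrier A. finite {i \<in> I. f i \<noteq> \<zero>\<^bsub>A\<^esub>}}"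
  and free_module_add: "x \<oplus>\<^bsub>free_module A I\<^esub> y = (\<lambda>i\<in>I. x i \<oplus>\<^bsub>A\<^esub> y i)"
  and free_module_zero: "\<zero>\<^bsub>free_module A I\<^esub> = (\<lambda>i\<in>I. \<zero>\<^bsub>A\<^esub>)"
  and free_module_smult: "a \<odot>\<^bsub>free_module A I\<^esub> x = (\<lambda>i\<in>I. a \<otimes>\<^bsub>A\<^esub> x i)"
  by (simp_all add: free_module_def)

lemmas free_module_simps =
  free_module_carrier free_module_add free_module_zero free_module_smult

lemma module_free_module:
  assumes "cring A"
  shows "module A (free_module A I)"
proof -
  interpret A: cring A by fact
  let ?F = "free_module A I"
  have add_closed: "(\<lambda>i\<in>I. x i \<oplus>\<^bsub>A\<^esub> y i) \<in> carrier ?F"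
    if "x \<in> carrier ?F" "y \<in> carrier ?F" for x y
  proof -
    have "{i \<in> I. x i \<oplus>\<^bsub>A\<^esub> y i \<noteq> \<zero>\<^bsub>A\<^esub>} \<subseteq> {i \<in> I. x i \<noteq> \<zero>\<^bsub>A\<^esub>} \<union> {i \<in> I. y i \<noteq> \<zero>\<^bsub>A\<^esub>}"
      by auto
    with that show ?thesis
      by (auto simp: free_module_carrier PiE_iff cong: conj_cong intro: finite_subset)
  qed
  have smult_closed: "(\<lambda>i\<in>I. a \<otimes>\<^bsub>A\<^esub> x i) \<in> carrier ?F"
    if "a \<in> carrier A" "x \<in> carrier ?F" for a x
  proof -
    have "{i \<in> I. a \<otimes>\<^bsub>A\<^esub> x i \<noteq> \<zero>\<^bsub>A\<^esub>} \<subseteq> {i \<in> I. x i \<noteq> \<zero>\<^bsub>A\<^esub>}"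
      using that by (auto simp: free_module_carrier PiE_iff)
    with that show ?thesis
      by (auto simp: free_module_carrier PiE_iff cong: conj_cong intro: finite_subset)
  qed
  have neg_closed: "(\<lambda>i\<in>I. \<ominus>\<^bsub>A\<^esub> x i) \<in> carrier ?F" if "x \<in> carrier ?F" for x
  proof -
    have "{i \<in> I. \<ominus>\<^bsub>A\<^esub> x i \<noteq> \<zero>\<^bsub>A\<^esub>} \<subseteq> {i \<in> I. x i \<noteq> \<zero>\<^bsub>A\<^esub>}"
      using that by (auto simp: free_module_carrier PiE_iff)
    with that show ?thesis
      by (auto simp: free_module_carrier PiE_iff cong: conj_cong intro: finite_subset)
  qed
  show ?thesis
  proof (rule moduleI)
    show "cring A" by fact
    show "abelian_group ?F"
    proof (rule abelian_groupI)
      fix x assume "x \<in> carrier ?F"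
      then show "\<exists>y\<in>carrier ?F. y \<oplus>\<^bsub>?F\<^esub> x = \<zero>\<^bsub>?F\<^esub>"
        using neg_closed
        by (intro bexI[of _ "\<lambda>i\<in>I. \<ominus>\<^bsub>A\<^esub> x i"] restrict_ext)
           (auto simp: free_module_simps PiE_iff A.l_neg)
    qed (use add_closed in \<open>auto intro!: restrict_ext
          simp: free_module_simps PiE_iff A.a_ac extensional_def\<close>)
  qed (use smult_closed in \<open>auto intro!: restrict_ext
        simp: free_module_simps PiE_iff A.l_distr A.r_distr A.m_assoc extensional_def\<close>)
qed

lemma torsion_free_iff:
  assumes "module A M"
  shows "torsion_free A M \<longleftrightarrow>
    (\<forall>\<alpha>\<in>non_zero_divisors A. \<forall>m\<in>carrier M. \<alpha> \<odot>\<^bsub>M\<^esub> m = \<zero>\<^bsub>M\<^esub> \<longrightarrow> m = \<zero>\<^bsub>M\<^esub>)"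
proof -
  interpret module A M by fact
  have "\<one>\<^bsub>A\<^esub> \<in> non_zero_divisors A"
    by (simp add: non_zero_divisors_def)
  then have "\<zero>\<^bsub>M\<^esub> \<in> torsion A M"
    by (force simp: torsion_def)
  then show ?thesis
    by (auto simp: torsion_free_def torsion_def)
qed

lemma torsion_free_free_module:
  assumes "cring A"
  shows "torsion_free A (free_module A I)"
proof -
  have "x = \<zero>\<^bsub>free_module A I\<^esub>"
    if \<alpha>: "\<alpha> \<in> non_zero_divisors A" and x: "x \<in> carrier (free_module A I)"
      and "\<alpha> \<odot>\<^bsub>free_module A I\<^esub> x = \<zero>\<^bsub>free_module A I\<^esub>" for \<alpha> x
  proof (rule ext)
    fix i
    have "\<alpha> \<otimes>\<^bsub>A\<^esub> x i = \<zero>\<^bsub>A\<^esub>" if "i \<in> I"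
      using fun_cong[OF \<open>\<alpha> \<odot>\<^bsub>free_module A I\<^esub> x = _\<close>, of i] that
      by (simp add: free_module_simps)
    with \<alpha> x show "x i = \<zero>\<^bsub>free_module A I\<^esub> i"
      by (cases "i \<in> I") (auto simp: free_module_simps non_zero_divisors_def PiE_iff extensional_def)
  qed
  then show ?thesis
    by (simp add: torsion_free_iff module_free_module[OF assms])
qed

context
  fixes A :: "('a, 'r) ring_scheme"
    and M :: "('a, 'm, 'x) module_scheme"
    and N :: "('a, 'n, 'y) module_scheme"
    and h :: "'m \<Rightarrow> 'n"
  assumes M: "module A M" and N: "module A N" and h: "h \<in> module_hom A M N"
begin

interpretation M: module A M by (rule M)
interpretation N: module A N by (rule N)

lemma module_hom_closed: "m \<in> carrier M \<Longrightarrow> h m \<in> carrier N"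
  and module_hom_add: "m \<in> carrier M \<Longrightarrow> m' \<in> carrier M \<Longrightarrow> h (m \<oplus>\<^bsub>M\<^esub> m') = h m \<oplus>\<^bsub>N\<^esub> h m'"
  and module_hom_smult: "a \<in> carrier A \<Longrightarrow> m \<in> carrier M \<Longrightarrow> h (a \<odot>\<^bsub>M\<^esub> m) = a \<odot>\<^bsub>N\<^esub> h m"
  using h by (auto simp: module_hom_def)

lemma module_hom_zero: "h \<zero>\<^bsub>M\<^esub> = \<zero>\<^bsub>N\<^esub>"
  using module_hom_smult[of "\<zero>\<^bsub>A\<^esub>" "\<zero>\<^bsub>M\<^esub>"] module_hom_closed[of "\<zero>\<^bsub>M\<^esub>"] by simp

lemma module_hom_minus: "m \<in> carrier M \<Longrightarrow> h (\<ominus>\<^bsub>M\<^esub> m) = \<ominus>\<^bsub>N\<^esub> h m"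
  using module_hom_smult[of "\<ominus>\<^bsub>A\<^esub> \<one>\<^bsub>A\<^esub>" m] module_hom_closed[of m]
  by (simp add: M.smult_l_minus N.smult_l_minus)

lemma module_hom_inj_onI:
  assumes "\<And>m. m \<in> carrier M \<Longrightarrow> h m = \<zero>\<^bsub>N\<^esub> \<Longrightarrow> m = \<zero>\<^bsub>M\<^esub>"
  shows "inj_on h (carrier M)"
proof (rule inj_onI)
  fix m m' assume m: "m \<in> carrier M" "m' \<in> carrier M" and "h m = h m'"
  then have "h (m \<ominus>\<^bsub>M\<^esub> m') = \<zero>\<^bsub>N\<^esub>"
    by (simp add: a_minus_def module_hom_add module_hom_minus module_hom_closed N.r_neg)
  then have "m \<ominus>\<^bsub>M\<^esub> m' = \<zero>\<^bsub>M\<^esub>"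
    using assms m by simp
  moreover have "m = (m \<ominus>\<^bsub>M\<^esub> m') \<oplus>\<^bsub>M\<^esub> m'"
    using m by (simp add: a_minus_def M.a_assoc M.l_neg)
  ultimately show "m = m'"
    using m by simp
qed

lemma submodule_image: "submodule (h ` carrier M) A N"
proof (rule N.submoduleI)
  show "\<zero>\<^bsub>N\<^esub> \<in> h ` carrier M"
    using module_hom_zero by force
qed (auto simp: module_hom_closed module_hom_add[symmetric] module_hom_minus[symmetric]
       module_hom_smult[symmetric])

lemma iso_to_submoduleI:
  assumes "\<And>m. m \<in> carrier M \<Longrightarrow> h m = \<zero>\<^bsub>N\<^esub> \<Longrightarrow> m = \<zero>\<^bsub>M\<^esub>"
  shows "iso_to_submodule A M N"
  unfolding iso_to_submodule_def
  using submodule_image h inj_on_imp_bij_betw[OF module_hom_inj_onI[OF assms]] by blast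

end

lemma torsion_free_if_iso_to_submodule:
  assumes M: "module A M" and N: "module A N"
    and iso: "iso_to_submodule A M N" and tf: "torsion_free A N"
  shows "torsion_free A M"
proof -
  interpret M: module A M by fact
  obtain h where h: "h \<in> module_hom A M N" and inj: "inj_on h (carrier M)"
    using iso by (auto simp: iso_to_submodule_def bij_betw_def)
  have "m = \<zero>\<^bsub>M\<^esub>"
    if \<alpha>: "\<alpha> \<in> non_zero_divisors A" and m: "m \<in> carrier M" and "\<alpha> \<odot>\<^bsub>M\<^esub> m = \<zero>\<^bsub>M\<^esub>" for \<alpha> m
  proof -
    have "\<alpha> \<odot>\<^bsub>N\<^esub> h m = \<zero>\<^bsub>N\<^esub>"
      using that module_hom_smult[OF M N h, of \<alpha> m, symmetric] module_hom_zero[OF M N h]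
      by (simp add: non_zero_divisors_def)
    then have "h m = h \<zero>\<^bsub>M\<^esub>"
      using tf \<alpha> m module_hom_closed[OF M N h] module_hom_zero[OF M N h]
      by (simp add: torsion_free_iff[OF N])
    then show ?thesis
      using inj m by (auto dest: inj_onD)
  qed
  then show ?thesis
    by (simp add: torsion_free_iff[OF M])
qed

definition restrict_scalars :: "('b \<Rightarrow> 'a) \<Rightarrow> ('a, 'm, 'x) module_scheme \<Rightarrow> ('b, 'm) module"
  where "restrict_scalars h M = \<lparr>carrier = carrier M, monoid.mult = monoid.mult M, one = one M,
    ring.zero = ring.zero M, ring.add = ring.add M, module.smult = (\<lambda>r m. h r \<odot>\<^bsub>M\<^esub> m)\<rparr>"

lemma restrict_scalars_simps [simp]:
  "carrier (restrict_scalars h M) = carrier M"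
  "m \<oplus>\<^bsub>restrict_scalars h M\<^esub> m' = m \<oplus>\<^bsub>M\<^esub> m'"
  "\<zero>\<^bsub>restrict_scalars h M\<^esub> = \<zero>\<^bsub>M\<^esub>"
  "r \<odot>\<^bsub>restrict_scalars h M\<^esub> m = h r \<odot>\<^bsub>M\<^esub> m"
  by (simp_all add: restrict_scalars_def)

lemma module_restrict_scalars:
  assumes h: "ring_hom_cring R A h" and M: "module A M"
  shows "module R (restrict_scalars h M)"
proof -
  interpret h: ring_hom_cring R A h by (rule h)
  interpret M: module A M by (rule M)
  show ?thesis
  proof (rule moduleI)
    show "abelian_group (restrict_scalars h M)"
    proof (rule abelian_groupI)
      fix x assume "x \<in> carrier (restrict_scalars h M)"
      then show "\<exists>y\<in>carrier (restrict_scalars h M). y \<oplus>\<^bsub>restrict_scalars h M\<^esub> x = \<zero>\<^bsub>restrict_scalars h M\<^esub>"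
        using M.l_neg by (intro bexI[of _ "\<ominus>\<^bsub>M\<^esub> x"]) auto
    qed (auto simp: M.a_ac)
  qed (auto simp: M.smult_l_distr M.smult_r_distr M.smult_assoc1 h.R.cring_axioms)
qed

section \<open>Linear forms on spans of finite lists\<close>

fun list_span :: "('a, 'r) ring_scheme \<Rightarrow> ('a, 'm, 'x) module_scheme \<Rightarrow> 'm list \<Rightarrow> 'm set" where
  "list_span R M [] = {\<zero>\<^bsub>M\<^esub>}"
| "list_span R M (x # xs) =
     {c \<odot>\<^bsub>M\<^esub> x \<oplus>\<^bsub>M\<^esub> y | c y. c \<in> carrier R \<and> y \<in> list_span R M xs}"

definition linear_form :: "('a, 'r) ring_scheme \<Rightarrow> ('a, 'm, 'x) module_scheme \<Rightarrow> 'm set \<Rightarrow> ('m \<Rightarrow> 'a) \<Rightarrow> bool"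
  where "linear_form R M V f \<longleftrightarrow> f \<in> V \<rightarrow> carrier R
    \<and> (\<forall>m\<in>V. \<forall>m'\<in>V. f (m \<oplus>\<^bsub>M\<^esub> m') = f m \<oplus>\<^bsub>R\<^esub> f m')
    \<and> (\<forall>r\<in>carrier R. \<forall>m\<in>V. f (r \<odot>\<^bsub>M\<^esub> m) = r \<otimes>\<^bsub>R\<^esub> f m)"

definition separating_forms ::
    "('a, 'r) ring_scheme \<Rightarrow> ('a, 'm, 'x) module_scheme \<Rightarrow> 'm set \<Rightarrow> ('m \<Rightarrow> 'a) list \<Rightarrow> bool"
  where "separating_forms R M V fs \<longleftrightarrow> (\<forall>f\<in>set fs. linear_form R M V f) \<and>
    (\<forall>m\<in>V. (\<forall>f\<in>set fs. f m = \<zero>\<^bsub>R\<^esub>) \<longrightarrow> m = \<zero>\<^bsub>M\<^esub>)"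

lemma list_span_ConsI:
  "c \<in> carrier R \<Longrightarrow> y \<in> list_span R M xs \<Longrightarrow> c \<odot>\<^bsub>M\<^esub> x \<oplus>\<^bsub>M\<^esub> y \<in> list_span R M (x # xs)"
  by auto

context module
begin

lemma list_span_carrier: "set xs \<subseteq> carrier M \<Longrightarrow> list_span R M xs \<subseteq> carrier M"
  by (induction xs) auto

lemma list_span_zero: "set xs \<subseteq> carrier M \<Longrightarrow> \<zero>\<^bsub>M\<^esub> \<in> list_span R M xs"
proof (induction xs)
  case (Cons x xs)
  then have "\<zero> \<odot>\<^bsub>M\<^esub> x \<oplus>\<^bsub>M\<^esub> \<zero>\<^bsub>M\<^esub> \<in> list_span R M (x # xs)"
    by (intro list_span_ConsI) auto
  with Cons.prems show ?case
    by simp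
qed simp

lemma list_span_add:
  "set xs \<subseteq> carrier M \<Longrightarrow> u \<in> list_span R M xs \<Longrightarrow> v \<in> list_span R M xs
    \<Longrightarrow> u \<oplus>\<^bsub>M\<^esub> v \<in> list_span R M xs"
proof (induction xs arbitrary: u v)
  case (Cons x xs)
  then obtain c y d z where
    u: "u = c \<odot>\<^bsub>M\<^esub> x \<oplus>\<^bsub>M\<^esub> y" "c \<in> carrier R" "y \<in> list_span R M xs" and
    v: "v = d \<odot>\<^bsub>M\<^esub> x \<oplus>\<^bsub>M\<^esub> z" "d \<in> carrier R" "z \<in> list_span R M xs"
    by auto
  have "y \<in> carrier M" "z \<in> carrier M"
    using u v Cons.prems list_span_carrier by auto
  then have "u \<oplus>\<^bsub>M\<^esub> v = (c \<oplus> d) \<odot>\<^bsub>M\<^esub> x \<oplus>\<^bsub>M\<^esub> (y \<oplus>\<^bsub>M\<^esub> z)"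
    using u v Cons.prems by (simp add: smult_l_distr M.a_ac)
  with u v Cons show ?case
    by auto
qed simp

lemma list_span_smult:
  "set xs \<subseteq> carrier M \<Longrightarrow> r \<in> carrier R \<Longrightarrow> u \<in> list_span R M xs
    \<Longrightarrow> r \<odot>\<^bsub>M\<^esub> u \<in> list_span R M xs"
proof (induction xs arbitrary: u)
  case (Cons x xs)
  then obtain c y where
    u: "u = c \<odot>\<^bsub>M\<^esub> x \<oplus>\<^bsub>M\<^esub> y" "c \<in> carrier R" "y \<in> list_span R M xs"
    by auto
  have "y \<in> carrier M"
    using u Cons.prems list_span_carrier by auto
  then have "r \<odot>\<^bsub>M\<^esub> u = (r \<otimes> c) \<odot>\<^bsub>M\<^esub> x \<oplus>\<^bsub>M\<^esub> r \<odot>\<^bsub>M\<^esub> y"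
    using u Cons.prems by (simp add: smult_r_distr smult_assoc1)
  with u Cons show ?case
    by auto
qed simp

lemma list_span_diff:
  assumes "set xs \<subseteq> carrier M" "u \<in> list_span R M xs" "v \<in> list_span R M xs"
  shows "u \<ominus>\<^bsub>M\<^esub> v \<in> list_span R M xs"
proof -
  have "v \<in> carrier M"
    using assms list_span_carrier by blast
  then have "\<ominus>\<^bsub>M\<^esub> v = (\<ominus> \<one>) \<odot>\<^bsub>M\<^esub> v"
    by (simp add: smult_l_minus)
  then show ?thesis
    using assms by (simp add: a_minus_def list_span_add list_span_smult)
qed

lemma list_span_member: "set xs \<subseteq> carrier M \<Longrightarrow> x \<in> set xs \<Longrightarrow> x \<in> list_span R M xs"
proof (induction xs)
  case (Cons a xs)
  then have a: "a \<in> carrier M" and xs: "set xs \<subseteq> carrier M"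
    by auto
  show ?case
  proof (cases "x = a")
    case True
    have "\<one> \<odot>\<^bsub>M\<^esub> a \<oplus>\<^bsub>M\<^esub> \<zero>\<^bsub>M\<^esub> \<in> list_span R M (a # xs)"
      using xs by (intro list_span_ConsI list_span_zero) auto
    with True a show ?thesis
      by simp
  next
    case False
    with Cons xs have x: "x \<in> list_span R M xs"
      by auto
    with xs have "x = \<zero> \<odot>\<^bsub>M\<^esub> a \<oplus>\<^bsub>M\<^esub> x"
      using a subsetD[OF list_span_carrier[OF xs]] by simp
    also have "\<dots> \<in> list_span R M (a # xs)"
      using x by (intro list_span_ConsI) auto
    finally show ?thesis .
  qed
qed simp

lemma linear_form_zero:
  "linear_form R M V f \<Longrightarrow> \<zero>\<^bsub>M\<^esub> \<in> V \<Longrightarrow> f \<zero>\<^bsub>M\<^esub> = \<zero>"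
  unfolding linear_form_def using smult_l_null[of "\<zero>\<^bsub>M\<^esub>"]
  by (metis M.zero_closed R.l_null R.zero_closed funcset_mem)

lemma linear_form_rescale:
  assumes g: "linear_form R M V g" and c: "c \<in> carrier R"
    and W: "W \<subseteq> carrier M" and cW: "\<And>m. m \<in> W \<Longrightarrow> c \<odot>\<^bsub>M\<^esub> m \<in> V"
  shows "linear_form R M W (\<lambda>m. g (c \<odot>\<^bsub>M\<^esub> m))"
  unfolding linear_form_def
proof (intro conjI ballI Pi_I)
  fix m m' assume "m \<in> W" "m' \<in> W"
  then show "g (c \<odot>\<^bsub>M\<^esub> (m \<oplus>\<^bsub>M\<^esub> m')) = g (c \<odot>\<^bsub>M\<^esub> m) \<oplus> g (c \<odot>\<^bsub>M\<^esub> m')"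
    using g c cW subsetD[OF W] by (simp add: linear_form_def smult_r_distr)
next
  fix r m assume "r \<in> carrier R" "m \<in> W"
  then have "c \<odot>\<^bsub>M\<^esub> (r \<odot>\<^bsub>M\<^esub> m) = r \<odot>\<^bsub>M\<^esub> (c \<odot>\<^bsub>M\<^esub> m)"
    using c subsetD[OF W] by (simp add: smult_assoc1[symmetric] m_comm)
  with \<open>r \<in> carrier R\<close> \<open>m \<in> W\<close> show "g (c \<odot>\<^bsub>M\<^esub> (r \<odot>\<^bsub>M\<^esub> m)) = r \<otimes> g (c \<odot>\<^bsub>M\<^esub> m)"
    using g cW by (simp add: linear_form_def)
qed (use g cW in \<open>auto simp: linear_form_def\<close>)

lemma list_span_Cons_coordinates:
  assumes ys: "set ys \<subseteq> carrier M" and x: "x \<in> carrier M"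
    and indep: "\<And>c. c \<in> carrier R \<Longrightarrow> c \<odot>\<^bsub>M\<^esub> x \<in> list_span R M ys \<Longrightarrow> c = \<zero>"
  obtains \<kappa> \<rho> where "\<And>c y. c \<in> carrier R \<Longrightarrow> y \<in> list_span R M ys \<Longrightarrow>
      \<kappa> (c \<odot>\<^bsub>M\<^esub> x \<oplus>\<^bsub>M\<^esub> y) = c \<and> \<rho> (c \<odot>\<^bsub>M\<^esub> x \<oplus>\<^bsub>M\<^esub> y) = y"
proof -
  let ?V = "list_span R M ys"
  let ?e = "\<lambda>(c, y). c \<odot>\<^bsub>M\<^esub> x \<oplus>\<^bsub>M\<^esub> y"
  have "inj_on ?e (carrier R \<times> ?V)"
  proof (rule inj_onI, clarify)
    fix c y c' y'
    assume c: "c \<in> carrier R" "c' \<in> carrier R" and y: "y \<in> ?V" "y' \<in> ?V"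
      and eq: "c \<odot>\<^bsub>M\<^esub> x \<oplus>\<^bsub>M\<^esub> y = c' \<odot>\<^bsub>M\<^esub> x \<oplus>\<^bsub>M\<^esub> y'"
    have yM: "y \<in> carrier M" "y' \<in> carrier M"
      using y ys list_span_carrier by auto
    have "(c \<ominus> c') \<odot>\<^bsub>M\<^esub> x = c \<odot>\<^bsub>M\<^esub> x \<ominus>\<^bsub>M\<^esub> c' \<odot>\<^bsub>M\<^esub> x"
      using c x by (simp add: a_minus_def smult_l_distr smult_l_minus)
    also have "\<dots> = y' \<ominus>\<^bsub>M\<^esub> y"
      using c x yM eq by (intro M.minus_eq_minus_if_add_eq) auto
    finally have "(c \<ominus> c') \<odot>\<^bsub>M\<^esub> x = y' \<ominus>\<^bsub>M\<^esub> y" .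
    then have "c \<ominus> c' = \<zero>"
      using c y ys by (intro indep) (auto intro: list_span_diff)
    then have "c = c'"
      using c by simp
    with eq show "c = c' \<and> y = y'"
      using c x yM by simp
  qed
  then have "inv_into (carrier R \<times> ?V) ?e (c \<odot>\<^bsub>M\<^esub> x \<oplus>\<^bsub>M\<^esub> y) = (c, y)"
    if "c \<in> carrier R" "y \<in> ?V" for c y
    using inv_into_f_f[of ?e _ "(c, y)"] that by simp
  then show thesis
    by (intro that[of "\<lambda>m. fst (inv_into (carrier R \<times> ?V) ?e m)"
          "\<lambda>m. snd (inv_into (carrier R \<times> ?V) ?e m)"]) simp
qed

lemma linear_form_coordinates:
  assumes ys: "set ys \<subseteq> carrier M" and x: "x \<in> carrier M"
    and coords: "\<And>c y. c \<in> carrier R \<Longrightarrow> y \<in> list_span R M ys \<Longrightarrow>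
      \<kappa> (c \<odot>\<^bsub>M\<^esub> x \<oplus>\<^bsub>M\<^esub> y) = c \<and> \<rho> (c \<odot>\<^bsub>M\<^esub> x \<oplus>\<^bsub>M\<^esub> y) = y"
  shows linear_form_first_coordinate: "linear_form R M (list_span R M (x # ys)) \<kappa>"
    and linear_form_comp_coordinates: "linear_form R M (list_span R M ys) g \<Longrightarrow>
      linear_form R M (list_span R M (x # ys)) (\<lambda>m. g (\<rho> m))"
proof -
  let ?V = "list_span R M ys"
  have add: "(c \<odot>\<^bsub>M\<^esub> x \<oplus>\<^bsub>M\<^esub> y) \<oplus>\<^bsub>M\<^esub> (c' \<odot>\<^bsub>M\<^esub> x \<oplus>\<^bsub>M\<^esub> y') = (c \<oplus> c') \<odot>\<^bsub>M\<^esub> x \<oplus>\<^bsub>M\<^esub> (y \<oplus>\<^bsub>M\<^esub> y')"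
    and smult: "r \<odot>\<^bsub>M\<^esub> (c \<odot>\<^bsub>M\<^esub> x \<oplus>\<^bsub>M\<^esub> y) = (r \<otimes> c) \<odot>\<^bsub>M\<^esub> x \<oplus>\<^bsub>M\<^esub> r \<odot>\<^bsub>M\<^esub> y"
    if "c \<in> carrier R" "c' \<in> carrier R" "r \<in> carrier R" "y \<in> ?V" "y' \<in> ?V" for c c' r y y'
    using that x subsetD[OF list_span_carrier[OF ys]]
    by (auto simp: smult_l_distr smult_r_distr smult_assoc1 M.a_ac)
  show "linear_form R M (list_span R M (x # ys)) \<kappa>"
    unfolding linear_form_def
    by (auto simp: coords add smult list_span_add[OF ys] list_span_smult[OF ys])
  show "linear_form R M (list_span R M (x # ys)) (\<lambda>m. g (\<rho> m))" if g: "linear_form R M ?V g"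
    using g unfolding linear_form_def
    by (auto simp: coords add smult list_span_add[OF ys] list_span_smult[OF ys])
qed

lemma torsion_free_smult_eq_zeroD:
  assumes "domain R" "torsion_free R M"
    and "r \<in> carrier R" "r \<noteq> \<zero>" "m \<in> carrier M" "r \<odot>\<^bsub>M\<^esub> m = \<zero>\<^bsub>M\<^esub>"
  shows "m = \<zero>\<^bsub>M\<^esub>"
proof -
  have "module R M"
    by unfold_locales
  then show ?thesis
    using assms domain.non_zero_divisorsI[OF assms(1,3,4)] by (auto simp: torsion_free_iff)
qed

lemma separating_forms_Cons_dependent:
  assumes "domain R" "torsion_free R M"
    and ys: "set ys \<subseteq> carrier M" and x: "x \<in> carrier M"
    and gs: "separating_forms R M (list_span R M ys) gs"
    and c: "c \<in> carrier R" "c \<noteq> \<zero>" "c \<odot>\<^bsub>M\<^esub> x \<in> list_span R M ys"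
  shows "separating_forms R M (list_span R M (x # ys)) (map (\<lambda>g m. g (c \<odot>\<^bsub>M\<^esub> m)) gs)"
proof -
  let ?V = "list_span R M ys" and ?W = "list_span R M (x # ys)"
  have W: "?W \<subseteq> carrier M"
    by (rule list_span_carrier) (use x ys in simp)
  have cW: "c \<odot>\<^bsub>M\<^esub> m \<in> ?V" if "m \<in> ?W" for m
  proof -
    from that obtain d y where m: "m = d \<odot>\<^bsub>M\<^esub> x \<oplus>\<^bsub>M\<^esub> y" "d \<in> carrier R" "y \<in> ?V"
      by auto
    then have "c \<odot>\<^bsub>M\<^esub> m = d \<odot>\<^bsub>M\<^esub> (c \<odot>\<^bsub>M\<^esub> x) \<oplus>\<^bsub>M\<^esub> c \<odot>\<^bsub>M\<^esub> y"
      using c x subsetD[OF list_span_carrier[OF ys]]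
      by (simp add: smult_r_distr smult_assoc1[symmetric] m_comm)
    then show ?thesis
      using m c by (simp add: list_span_add[OF ys] list_span_smult[OF ys])
  qed
  have "m = \<zero>\<^bsub>M\<^esub>" if "m \<in> ?W" "\<forall>g\<in>set gs. g (c \<odot>\<^bsub>M\<^esub> m) = \<zero>" for m
  proof -
    have "c \<odot>\<^bsub>M\<^esub> m = \<zero>\<^bsub>M\<^esub>"
      using gs cW that by (auto simp: separating_forms_def)
    with that show ?thesis
      using torsion_free_smult_eq_zeroD[OF assms(1,2) c(1,2)] W by blast
  qed
  with gs show ?thesis
    using linear_form_rescale[OF _ c(1) W cW] by (auto simp: separating_forms_def)
qed

lemma separating_forms_Cons_independent:
  assumes ys: "set ys \<subseteq> carrier M" and x: "x \<in> carrier M"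
    and gs: "separating_forms R M (list_span R M ys) gs"
    and indep: "\<And>c. c \<in> carrier R \<Longrightarrow> c \<odot>\<^bsub>M\<^esub> x \<in> list_span R M ys \<Longrightarrow> c = \<zero>"
  obtains fs where "separating_forms R M (list_span R M (x # ys)) fs"
proof -
  obtain \<kappa> \<rho> where coords: "\<And>c y. c \<in> carrier R \<Longrightarrow> y \<in> list_span R M ys \<Longrightarrow>
      \<kappa> (c \<odot>\<^bsub>M\<^esub> x \<oplus>\<^bsub>M\<^esub> y) = c \<and> \<rho> (c \<odot>\<^bsub>M\<^esub> x \<oplus>\<^bsub>M\<^esub> y) = y"
    using list_span_Cons_coordinates[OF ys x indep] by blast
  have "m = \<zero>\<^bsub>M\<^esub>"
    if "m \<in> list_span R M (x # ys)" "\<kappa> m = \<zero>" "\<forall>g\<in>set gs. g (\<rho> m) = \<zero>" for m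
  proof -
    from that obtain c y where m: "m = c \<odot>\<^bsub>M\<^esub> x \<oplus>\<^bsub>M\<^esub> y" "c \<in> carrier R" "y \<in> list_span R M ys"
      by auto
    with that coords gs have "c = \<zero>" "y = \<zero>\<^bsub>M\<^esub>"
      by (auto simp: separating_forms_def)
    with m x show ?thesis
      by simp
  qed
  with gs have "separating_forms R M (list_span R M (x # ys)) (\<kappa> # map (\<lambda>g m. g (\<rho> m)) gs)"
    using linear_form_first_coordinate[OF ys x coords] linear_form_comp_coordinates[OF ys x coords]
    by (auto simp: separating_forms_def)
  then show thesis
    by (rule that)
qed

lemma separating_forms_exist:
  assumes "domain R" "torsion_free R M" "set xs \<subseteq> carrier M"
  obtains fs where "separating_forms R M (list_span R M xs) fs"
  using assms(3)
proof (induction xs arbitrary: thesis)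
  case Nil
  show ?case
    by (rule Nil.prems(1)[of "[]"]) (simp add: separating_forms_def)
next
  case (Cons x ys)
  then have x: "x \<in> carrier M" and ys: "set ys \<subseteq> carrier M"
    by auto
  obtain gs where gs: "separating_forms R M (list_span R M ys) gs"
    using Cons.IH[OF _ ys] by blast
  show ?case
  proof (cases "\<exists>c\<in>carrier R. c \<noteq> \<zero> \<and> c \<odot>\<^bsub>M\<^esub> x \<in> list_span R M ys")
    case True
    then show ?thesis
      using separating_forms_Cons_dependent[OF assms(1,2) ys x gs] Cons.prems(1) by blast
  next
    case False
    then show ?thesis
      using separating_forms_Cons_independent[OF ys x gs] Cons.prems(1) by blast
  qed
qed

end

section \<open>The truncated polynomial ring\<close>

locale trunc_poly = UP_cring R P for R (structure) and P (structure) +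
  fixes n :: nat
begin

abbreviation "J \<equiv> PIdl\<^bsub>P\<^esub> (up_ring.monom P \<one> n)"
abbreviation "A \<equiv> P Quot J"
abbreviation "\<pi> \<equiv> \<lambda>p. J +>\<^bsub>P\<^esub> p"
abbreviation "cst \<equiv> \<lambda>r. \<pi> (up_ring.monom P r 0)"
abbreviation "T \<equiv> \<pi> (up_ring.monom P \<one> (Suc 0))"
  \<comment> \<open>\<open>Suc 0\<close> rather than \<open>1\<close>: \<open>One_nat_def\<close> is a simp rule, so only this form survives simplification\<close>

lemma ideal_J: "ideal J P"
  by (rule P.cgenideal_ideal) simp

lemma cring_A: "cring A"
  by (rule ideal.quotient_is_cring[OF ideal_J P.cring_axioms])

lemma ring_hom_cring_\<pi>: "ring_hom_cring P A \<pi>"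
  using ideal.rcos_ring_hom_cring[OF ideal_J P.cring_axioms] by simp

end

sublocale trunc_poly \<subseteq> A: cring "P Quot (PIdl\<^bsub>P\<^esub> up_ring.monom P \<one> n)"
  by (rule cring_A)

sublocale trunc_poly \<subseteq> \<pi>: ring_hom_cring P "P Quot (PIdl\<^bsub>P\<^esub> up_ring.monom P \<one> n)"
    "\<lambda>p. (PIdl\<^bsub>P\<^esub> up_ring.monom P \<one> n) +>\<^bsub>P\<^esub> p"
  by (rule ring_hom_cring_\<pi>)

(* Inside ring contexts the names coeff and monom denote the list polynomials of
   HOL-Algebra.Polynomials, hence the qualified up_ring.coeff and up_ring.monom. *)

context UP_cring
begin

lemma coeff_finsum_monom:
  assumes "finite F" "c \<in> F \<rightarrow> carrier R"
  shows "up_ring.coeff P (\<Oplus>\<^bsub>P\<^esub> i\<in>F. up_ring.monom P (c i) i) k = (if k \<in> F then c k else \<zero>)"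
proof -
  have "up_ring.coeff P (\<Oplus>\<^bsub>P\<^esub> i\<in>F. up_ring.monom P (c i) i) k = (\<Oplus>i\<in>F. up_ring.coeff P (up_ring.monom P (c i) i) k)"
    using assms by (intro coeff_finsum) (auto simp: Pi_iff)
  also have "\<dots> = (\<Oplus>i\<in>F. if k = i then c i else \<zero>)"
    using assms by (intro R.finsum_cong') (auto simp: Pi_iff)
  also have "\<dots> = (if k \<in> F then c k else \<zero>)"
  proof (cases "k \<in> F")
    case False
    then have "(\<Oplus>i\<in>F. if k = i then c i else \<zero>) = (\<Oplus>i\<in>F. \<zero>)"
      by (intro R.finsum_cong') auto
    with False show ?thesis
      by simp
  qed (use assms in \<open>auto simp: R.finsum_singleton\<close>)
  finally show ?thesis .
qed

lemma coeff_mult_monom_below: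
  assumes "q \<in> carrier P" "k < n"
  shows "up_ring.coeff P (q \<otimes>\<^bsub>P\<^esub> up_ring.monom P \<one> n) k = \<zero>"
proof -
  have "up_ring.coeff P (q \<otimes>\<^bsub>P\<^esub> up_ring.monom P \<one> n) k = (\<Oplus>j\<in>{..k}. up_ring.coeff P q j \<otimes> up_ring.coeff P (up_ring.monom P \<one> n) (k - j))"
    using assms by simp
  also have "\<dots> = (\<Oplus>j\<in>{..k}. \<zero>)"
    using assms by (intro R.finsum_cong') auto
  finally show ?thesis
    by simp
qed

end

context trunc_poly
begin

lemma J_eq: "J = {p \<in> carrier P. \<forall>i<n. up_ring.coeff P p i = \<zero>}"
proof
  show "J \<subseteq> {p \<in> carrier P. \<forall>i<n. up_ring.coeff P p i = \<zero>}"
    using coeff_mult_monom_below by (auto simp: cgenideal_def)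
next
  show "{p \<in> carrier P. \<forall>i<n. up_ring.coeff P p i = \<zero>} \<subseteq> J"
  proof clarify
    fix p assume p: "p \<in> carrier P" and low: "\<forall>i<n. up_ring.coeff P p i = \<zero>"
    define q where "q = (\<Oplus>\<^bsub>P\<^esub> i\<in>{..deg R p}. up_ring.monom P (up_ring.coeff P p (i + n)) i)"
    have q: "q \<in> carrier P"
      using p by (auto simp: q_def intro!: P.finsum_closed)
    have coeff_q: "up_ring.coeff P q j = up_ring.coeff P p (j + n)" for j
      using p deg_aboveD[of p "j + n"]
      by (auto simp: q_def coeff_finsum_monom)
    have "p = q \<otimes>\<^bsub>P\<^esub> up_ring.monom P \<one> n"
    proof (rule up_eqI)
      fix k
      show "up_ring.coeff P p k = up_ring.coeff P (q \<otimes>\<^bsub>P\<^esub> up_ring.monom P \<one> n) k"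
      proof (cases "k < n")
        case True
        then show ?thesis
          using low coeff_mult_monom_below q by simp
      next
        case False
        then obtain j where k: "k = j + n"
          by (metis le_add_diff_inverse2 not_less)
        have "up_ring.coeff P (q \<otimes>\<^bsub>P\<^esub> up_ring.monom P \<one> n) k
            = up_ring.coeff P (up_ring.monom P \<one> n \<otimes>\<^bsub>P\<^esub> q) (j + n)"
          using q k by (simp add: P.m_comm)
        also have "\<dots> = up_ring.coeff P q j"
          by (subst coeff_monom_mult) (use q in auto)
        finally show ?thesis
          using coeff_q k by simp
      qed
    qed (use p q in auto)
    with q show "p \<in> J"
      by (auto simp: cgenideal_def)
  qed
qed

lemma mem_J_iff: "p \<in> J \<longleftrightarrow> p \<in> carrier P \<and> (\<forall>i<n. up_ring.coeff P p i = \<zero>)"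
  by (subst J_eq) simp

lemma zero_A: "\<zero>\<^bsub>A\<^esub> = J"
  unfolding FactRing_def by (simp only: ring.simps)

lemma \<pi>_eq_zero_iff: "p \<in> carrier P \<Longrightarrow> \<pi> p = \<zero>\<^bsub>A\<^esub> \<longleftrightarrow> p \<in> J"
  using ideal.rcos_const_imp_mem[OF ideal_J] P.a_rcos_zero[OF ideal_J] by (auto simp: zero_A)

lemma carrier_A: "carrier A = \<pi> ` carrier P"
  unfolding FactRing_def partial_object.simps A_RCOSETS_def RCOSETS_def a_r_coset_def by auto

lemma cst_closed [intro, simp]: "r \<in> carrier R \<Longrightarrow> cst r \<in> carrier A"
  and T_closed [intro, simp]: "T \<in> carrier A"
  by simp_all

lemma cst_mult_T_pow_closed [intro, simp]:
  "c \<in> carrier R \<Longrightarrow> cst c \<otimes>\<^bsub>A\<^esub> T [^]\<^bsub>A\<^esub> (i::nat) \<in> carrier A"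
  by (intro A.m_closed A.nat_pow_closed cst_closed T_closed)

lemma cst_add: "a \<in> carrier R \<Longrightarrow> b \<in> carrier R \<Longrightarrow> cst (a \<oplus> b) = cst a \<oplus>\<^bsub>A\<^esub> cst b"
  by (simp add: \<pi>.hom_add)

lemma cst_mult: "a \<in> carrier R \<Longrightarrow> b \<in> carrier R \<Longrightarrow> cst (a \<otimes> b) = cst a \<otimes>\<^bsub>A\<^esub> cst b"
  using monom_mult[of a b 0 0] by (simp add: \<pi>.hom_mult)

lemma \<pi>_monom:
  assumes "c \<in> carrier R"
  shows "\<pi> (up_ring.monom P c i) = cst c \<otimes>\<^bsub>A\<^esub> T [^]\<^bsub>A\<^esub> i"
proof -
  have "up_ring.monom P c i = up_ring.monom P c 0 \<otimes>\<^bsub>P\<^esub> up_ring.monom P \<one> (Suc 0) [^]\<^bsub>P\<^esub> i"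
    using assms monom_mult[of c \<one> 0 i] by (simp add: monom_pow)
  then show ?thesis
    using assms by (simp del: monom_mult)
qed

lemma \<pi>_finsum_monom:
  assumes "finite F" "c \<in> F \<rightarrow> carrier R"
  shows "\<pi> (\<Oplus>\<^bsub>P\<^esub> i\<in>F. up_ring.monom P (c i) i) = (\<Oplus>\<^bsub>A\<^esub> i\<in>F. cst (c i) \<otimes>\<^bsub>A\<^esub> T [^]\<^bsub>A\<^esub> i)"
proof -
  have "\<pi> (\<Oplus>\<^bsub>P\<^esub> i\<in>F. up_ring.monom P (c i) i) = (\<Oplus>\<^bsub>A\<^esub> i\<in>F. \<pi> (up_ring.monom P (c i) i))"
    using assms by (simp add: Pi_iff comp_def)
  also have "\<dots> = (\<Oplus>\<^bsub>A\<^esub> i\<in>F. cst (c i) \<otimes>\<^bsub>A\<^esub> T [^]\<^bsub>A\<^esub> i)"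
    using assms by (intro A.finsum_cong' \<pi>_monom) (auto simp: Pi_iff)
  finally show ?thesis .
qed

lemma T_pow_eq_zero: "T [^]\<^bsub>A\<^esub> n = \<zero>\<^bsub>A\<^esub>"
  using monom_pow[of \<one> "Suc 0" n] \<pi>_eq_zero_iff[of "up_ring.monom P \<one> n"] P.cgenideal_self[of "up_ring.monom P \<one> n"]
  by (simp flip: \<pi>.hom_pow)

lemma trunc_induct [case_names zero add monom, consumes 1]:
  assumes "a \<in> carrier A"
    and zero: "Q \<zero>\<^bsub>A\<^esub>"
    and add: "\<And>a b. a \<in> carrier A \<Longrightarrow> b \<in> carrier A \<Longrightarrow> Q a \<Longrightarrow> Q b \<Longrightarrow> Q (a \<oplus>\<^bsub>A\<^esub> b)"
    and monom: "\<And>c (i::nat). c \<in> carrier R \<Longrightarrow> Q (cst c \<otimes>\<^bsub>A\<^esub> T [^]\<^bsub>A\<^esub> i)"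
  shows "Q a"
proof -
  have sum: "Q (\<Oplus>\<^bsub>A\<^esub> i\<in>F. cst (c i) \<otimes>\<^bsub>A\<^esub> T [^]\<^bsub>A\<^esub> i)"
    if "finite F" "c \<in> F \<rightarrow> carrier R" for F :: "nat set" and c
    using that
  proof (induction F rule: finite_induct)
    case (insert i F)
    then have "Q (cst (c i) \<otimes>\<^bsub>A\<^esub> T [^]\<^bsub>A\<^esub> i \<oplus>\<^bsub>A\<^esub> (\<Oplus>\<^bsub>A\<^esub> i\<in>F. cst (c i) \<otimes>\<^bsub>A\<^esub> T [^]\<^bsub>A\<^esub> i))"
      by (intro add monom A.finsum_closed cst_mult_T_pow_closed Pi_I) auto
    with insert show ?case
      by (subst A.finsum_insert) (blast intro: cst_mult_T_pow_closed)+
  qed (simp add: zero)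
  obtain p where p: "p \<in> carrier P" "a = \<pi> p"
    using \<open>a \<in> carrier A\<close> carrier_A by auto
  then have "a = \<pi> (\<Oplus>\<^bsub>P\<^esub> i\<in>{..deg R p}. up_ring.monom P (up_ring.coeff P p i) i)"
    by (simp add: up_repr)
  also have "\<dots> = (\<Oplus>\<^bsub>A\<^esub> i\<in>{..deg R p}. cst (up_ring.coeff P p i) \<otimes>\<^bsub>A\<^esub> T [^]\<^bsub>A\<^esub> i)"
    using p by (intro \<pi>_finsum_monom) auto
  finally show ?thesis
    using p sum[of "{..deg R p}" "\<lambda>i. up_ring.coeff P p i"] by auto
qed

lemma cst_non_zero_divisor:
  assumes "domain R" and r: "r \<in> carrier R" "r \<noteq> \<zero>"
  shows "cst r \<in> non_zero_divisors A"
  unfolding non_zero_divisors_def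
proof (intro CollectI conjI ballI impI)
  show "cst r \<in> carrier A"
    using r by simp
  fix v assume "v \<in> carrier A" and "cst r \<otimes>\<^bsub>A\<^esub> v = \<zero>\<^bsub>A\<^esub>"
  then obtain p where p: "p \<in> carrier P" "v = \<pi> p" and "\<pi> (r \<odot>\<^bsub>P\<^esub> p) = \<zero>\<^bsub>A\<^esub>"
    using r carrier_A by (auto simp: monom_mult_is_smult[symmetric] \<pi>.hom_mult)
  then have "\<forall>i<n. r \<otimes> up_ring.coeff P p i = \<zero>"
    using r by (simp add: \<pi>_eq_zero_iff mem_J_iff)
  then have "\<forall>i<n. up_ring.coeff P p i = \<zero>"
    using r p domain.integral_iff[OF \<open>domain R\<close>] by simp
  with p show "v = \<zero>\<^bsub>A\<^esub>"
    by (simp add: \<pi>_eq_zero_iff mem_J_iff)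
qed

lemma trunc_sum_eq_zeroD:
  assumes c: "c \<in> {..<n} \<rightarrow> carrier R"
    and "(\<Oplus>\<^bsub>A\<^esub> i\<in>{..<n}. cst (c i) \<otimes>\<^bsub>A\<^esub> T [^]\<^bsub>A\<^esub> i) = \<zero>\<^bsub>A\<^esub>" and "k < n"
  shows "c k = \<zero>"
proof -
  let ?q = "\<Oplus>\<^bsub>P\<^esub> i\<in>{..<n}. up_ring.monom P (c i) i"
  have "?q \<in> carrier P"
    using c by (intro P.finsum_closed) (auto simp: Pi_iff)
  moreover have "\<pi> ?q = \<zero>\<^bsub>A\<^esub>"
    using assms by (simp add: \<pi>_finsum_monom)
  ultimately have "up_ring.coeff P ?q k = \<zero>"
    using \<open>k < n\<close> by (simp add: \<pi>_eq_zero_iff mem_J_iff)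
  with c \<open>k < n\<close> show ?thesis
    by (simp add: coeff_finsum_monom)
qed

lemma ring_hom_cring_cst: "ring_hom_cring R A cst"
  using ring_hom_trans[OF const_ring_hom \<pi>.homh]
  by (intro ring_hom_cringI R.cring_axioms A.cring_axioms) (simp add: comp_def)

end

section \<open>Modules over the truncated polynomial ring\<close>

locale trunc_poly_module = trunc_poly R P n for R (structure) and P (structure) and n +
  fixes M :: "((nat \<Rightarrow> 'a) set, 'm, 'x) module_scheme" (structure)
  assumes module_M: "module (P Quot (PIdl\<^bsub>P\<^esub> up_ring.monom P \<one>\<^bsub>R\<^esub> n)) M"

sublocale trunc_poly_module \<subseteq> M: module "P Quot (PIdl\<^bsub>P\<^esub> up_ring.monom P \<one>\<^bsub>R\<^esub> n)" M
  by (rule module_M)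

context trunc_poly_module
begin

abbreviation "MR \<equiv> restrict_scalars cst M"

lemma module_MR: "module R MR"
  by (rule module_restrict_scalars[OF ring_hom_cring_cst module_M])

lemma T_pow_smult_closed [intro, simp]: "m \<in> carrier M \<Longrightarrow> T [^]\<^bsub>A\<^esub> (j::nat) \<odot>\<^bsub>M\<^esub> m \<in> carrier M"
  by (intro M.smult_closed A.nat_pow_closed T_closed)

lemma torsion_free_restrict_scalars:
  assumes "domain R" and "torsion_free A M"
  shows "torsion_free R MR"
proof -
  have "m = \<zero>\<^bsub>M\<^esub>"
    if r: "r \<in> non_zero_divisors R" and "m \<in> carrier M" "cst r \<odot>\<^bsub>M\<^esub> m = \<zero>\<^bsub>M\<^esub>" for r m
  proof -
    have "r \<in> carrier R" "r \<noteq> \<zero>"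
      using r domain.one_not_zero[OF \<open>domain R\<close>] by (force simp: non_zero_divisors_def)+
    then have "cst r \<in> non_zero_divisors A"
      by (rule cst_non_zero_divisor[OF \<open>domain R\<close>])
    with that \<open>torsion_free A M\<close> show ?thesis
      unfolding torsion_free_iff[OF module_M] by blast
  qed
  then show ?thesis
    by (simp add: torsion_free_iff[OF module_MR])
qed

definition T_pow_multiples :: "'m list \<Rightarrow> 'm list" where
  "T_pow_multiples ss = [T [^]\<^bsub>A\<^esub> i \<odot>\<^bsub>M\<^esub> s. s \<leftarrow> ss, i \<leftarrow> [0..<n]]"

lemma smult_mem_list_span_T_pow_multiples:
  assumes ss: "set ss \<subseteq> carrier M" and s: "s \<in> set ss" and "a \<in> carrier A"
  shows "a \<odot>\<^bsub>M\<^esub> s \<in> list_span R MR (T_pow_multiples ss)"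
proof -
  interpret MR: module R MR
    by (rule module_MR)
  have G: "set (T_pow_multiples ss) \<subseteq> carrier MR"
    using ss by (auto simp: T_pow_multiples_def)
  note span_zero = MR.list_span_zero[OF G] and span_add = MR.list_span_add[OF G]
    and span_smult = MR.list_span_smult[OF G]
  from \<open>a \<in> carrier A\<close> show ?thesis
  proof (induction a rule: trunc_induct)
    case zero
    then show ?case
      using s ss span_zero by auto
  next
    case (add a b)
    then show ?case
      using s ss span_add by (auto simp: M.smult_l_distr)
  next
    case (monom c i)
    have "T [^]\<^bsub>A\<^esub> i \<odot>\<^bsub>M\<^esub> s \<in> list_span R MR (T_pow_multiples ss)"
    proof (cases "i < n")
      case True
      then have "T [^]\<^bsub>A\<^esub> i \<odot>\<^bsub>M\<^esub> s \<in> set (T_pow_multiples ss)"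
        using s by (force simp: T_pow_multiples_def)
      then show ?thesis
        using MR.list_span_member[OF G] by simp
    next
      case False
      then have "T [^]\<^bsub>A\<^esub> i = \<zero>\<^bsub>A\<^esub>"
        using A.nat_pow_mult[OF T_closed, of n "i - n"] by (simp add: T_pow_eq_zero)
      with s ss span_zero show ?thesis
        by auto
    qed
    with monom s ss span_smult show ?case
      by (auto simp: M.smult_assoc1)
  qed
qed

lemma finite_spanning_list:
  assumes "finitely_generated_module A M"
  obtains G where "set G \<subseteq> carrier M" "list_span R MR G = carrier M"
proof -
  interpret MR: module R MR
    by (rule module_MR)
  obtain S where S: "finite S" "S \<subseteq> carrier M"
    and gen: "\<forall>x \<in> carrier M. \<exists>c \<in> S \<rightarrow> carrier A. x = (\<Oplus>\<^bsub>M\<^esub> s \<in> S. c s \<odot>\<^bsub>M\<^esub> s)"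
    using assms unfolding finitely_generated_module_def by blast
  obtain ss where ss: "set ss = S"
    using S(1) finite_list by blast
  let ?G = "T_pow_multiples ss"
  have G: "set ?G \<subseteq> carrier MR"
    using S ss by (auto simp: T_pow_multiples_def)
  have "x \<in> list_span R MR ?G" if "x \<in> carrier M" for x
  proof -
    obtain c where "c \<in> S \<rightarrow> carrier A" "x = (\<Oplus>\<^bsub>M\<^esub> s \<in> S. c s \<odot>\<^bsub>M\<^esub> s)"
      using gen \<open>x \<in> carrier M\<close> by blast
    then show ?thesis
      using S ss smult_mem_list_span_T_pow_multiples[of ss] MR.list_span_carrier[OF G]
        MR.list_span_zero[OF G] MR.list_span_add[OF G]
      by (auto intro!: M.finsum_mem_if_add_closed)
  qed
  with G MR.list_span_carrier[OF G] show thesis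
    by (intro that[of ?G]) auto
qed

definition lift_form :: "('m \<Rightarrow> 'a) \<Rightarrow> 'm \<Rightarrow> (nat \<Rightarrow> 'a) set" where
  "lift_form f m = (\<Oplus>\<^bsub>A\<^esub> i\<in>{..<n}. cst (f (T [^]\<^bsub>A\<^esub> (n - Suc i) \<odot>\<^bsub>M\<^esub> m)) \<otimes>\<^bsub>A\<^esub> T [^]\<^bsub>A\<^esub> i)"

context
  fixes f :: "'m \<Rightarrow> 'a"
  assumes f: "linear_form R MR (carrier M) f"
begin

lemma form_closed [simp]: "m \<in> carrier M \<Longrightarrow> f m \<in> carrier R"
  and form_add: "m \<in> carrier M \<Longrightarrow> m' \<in> carrier M \<Longrightarrow> f (m \<oplus>\<^bsub>M\<^esub> m') = f m \<oplus> f m'"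
  and form_cst: "r \<in> carrier R \<Longrightarrow> m \<in> carrier M \<Longrightarrow> f (cst r \<odot>\<^bsub>M\<^esub> m) = r \<otimes> f m"
  using f by (auto simp: linear_form_def)

lemma form_zero: "f \<zero>\<^bsub>M\<^esub> = \<zero>"
  using module.linear_form_zero[OF module_MR f] by simp

lemma lift_form_closed [simp]: "m \<in> carrier M \<Longrightarrow> lift_form f m \<in> carrier A"
  unfolding lift_form_def
  by (intro A.finsum_closed Pi_I cst_mult_T_pow_closed form_closed T_pow_smult_closed)

lemma lift_form_add:
  assumes "m \<in> carrier M" "m' \<in> carrier M"
  shows "lift_form f (m \<oplus>\<^bsub>M\<^esub> m') = lift_form f m \<oplus>\<^bsub>A\<^esub> lift_form f m'"
proof -
  let ?a = "\<lambda>m i. cst (f (T [^]\<^bsub>A\<^esub> (n - Suc i) \<odot>\<^bsub>M\<^esub> m)) \<otimes>\<^bsub>A\<^esub> T [^]\<^bsub>A\<^esub> i"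
  have "lift_form f (m \<oplus>\<^bsub>M\<^esub> m') = (\<Oplus>\<^bsub>A\<^esub> i\<in>{..<n}. ?a m i \<oplus>\<^bsub>A\<^esub> ?a m' i)"
    unfolding lift_form_def using assms
    by (intro A.finsum_cong') (simp_all add: M.smult_r_distr form_add cst_add A.l_distr)
  also have "\<dots> = lift_form f m \<oplus>\<^bsub>A\<^esub> lift_form f m'"
    unfolding lift_form_def using assms by (intro A.finsum_addf) auto
  finally show ?thesis .
qed

lemma lift_form_cst:
  assumes "r \<in> carrier R" "m \<in> carrier M"
  shows "lift_form f (cst r \<odot>\<^bsub>M\<^esub> m) = cst r \<otimes>\<^bsub>A\<^esub> lift_form f m"
proof -
  have "T [^]\<^bsub>A\<^esub> j \<odot>\<^bsub>M\<^esub> (cst r \<odot>\<^bsub>M\<^esub> m) = cst r \<odot>\<^bsub>M\<^esub> (T [^]\<^bsub>A\<^esub> j \<odot>\<^bsub>M\<^esub> m)" for j :: nat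
    using assms by (simp add: M.smult_assoc1[symmetric] A.m_comm)
  then have "lift_form f (cst r \<odot>\<^bsub>M\<^esub> m) = (\<Oplus>\<^bsub>A\<^esub> i\<in>{..<n}.
      cst r \<otimes>\<^bsub>A\<^esub> (cst (f (T [^]\<^bsub>A\<^esub> (n - Suc i) \<odot>\<^bsub>M\<^esub> m)) \<otimes>\<^bsub>A\<^esub> T [^]\<^bsub>A\<^esub> i))"
    unfolding lift_form_def using assms
    by (intro A.finsum_cong') (simp_all add: form_cst cst_mult A.m_assoc)
  also have "\<dots> = cst r \<otimes>\<^bsub>A\<^esub> lift_form f m"
    unfolding lift_form_def using assms by (intro A.finsum_rdistr[symmetric]) auto
  finally show ?thesis .
qed

lemma lift_form_zero: "lift_form f \<zero>\<^bsub>M\<^esub> = \<zero>\<^bsub>A\<^esub>"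
  using lift_form_cst[of \<zero> "\<zero>\<^bsub>M\<^esub>"] by simp

lemma lift_form_T:
  assumes m: "m \<in> carrier M"
  shows "lift_form f (T \<odot>\<^bsub>M\<^esub> m) = T \<otimes>\<^bsub>A\<^esub> lift_form f m"
proof -
  define g where "g i = cst (f (T [^]\<^bsub>A\<^esub> (n - i) \<odot>\<^bsub>M\<^esub> m)) \<otimes>\<^bsub>A\<^esub> T [^]\<^bsub>A\<^esub> i" for i
  have g: "g \<in> UNIV \<rightarrow> carrier A" "g 0 = \<zero>\<^bsub>A\<^esub>" "g n = \<zero>\<^bsub>A\<^esub>"
    using m by (auto simp: g_def T_pow_eq_zero form_zero)
  have "T [^]\<^bsub>A\<^esub> (n - Suc i) \<odot>\<^bsub>M\<^esub> (T \<odot>\<^bsub>M\<^esub> m) = T [^]\<^bsub>A\<^esub> (n - i) \<odot>\<^bsub>M\<^esub> m" if "i < n" for i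
    using m that A.nat_pow_Suc[of T "n - Suc i"] by (simp add: M.smult_assoc1[symmetric] Suc_diff_Suc)
  then have "lift_form f (T \<odot>\<^bsub>M\<^esub> m) = (\<Oplus>\<^bsub>A\<^esub> i\<in>{..<n}. g i)"
    unfolding lift_form_def g_def using m by (intro A.finsum_cong') auto
  also have "\<dots> = (\<Oplus>\<^bsub>A\<^esub> i\<in>{..<n}. g (Suc i))"
    using A.finsum_lessThan_shift[OF g] by simp
  also have "\<dots> = (\<Oplus>\<^bsub>A\<^esub> i\<in>{..<n}.
      T \<otimes>\<^bsub>A\<^esub> (cst (f (T [^]\<^bsub>A\<^esub> (n - Suc i) \<odot>\<^bsub>M\<^esub> m)) \<otimes>\<^bsub>A\<^esub> T [^]\<^bsub>A\<^esub> i))"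
    unfolding g_def using m
    by (intro A.finsum_cong') (simp_all add: A.m_ac)
  also have "\<dots> = T \<otimes>\<^bsub>A\<^esub> lift_form f m"
    unfolding lift_form_def using m by (intro A.finsum_rdistr[symmetric]) auto
  finally show ?thesis .
qed

lemma lift_form_T_pow: "m \<in> carrier M \<Longrightarrow> lift_form f (T [^]\<^bsub>A\<^esub> (i::nat) \<odot>\<^bsub>M\<^esub> m) = T [^]\<^bsub>A\<^esub> i \<otimes>\<^bsub>A\<^esub> lift_form f m"
proof (induction i arbitrary: m)
  case (Suc i)
  then have "lift_form f (T [^]\<^bsub>A\<^esub> Suc i \<odot>\<^bsub>M\<^esub> m) = T [^]\<^bsub>A\<^esub> i \<otimes>\<^bsub>A\<^esub> (T \<otimes>\<^bsub>A\<^esub> lift_form f m)"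
    by (simp add: M.smult_assoc1 lift_form_T)
  with Suc.prems show ?case
    by (simp add: A.m_assoc)
qed simp

lemma lift_form_smult:
  "a \<in> carrier A \<Longrightarrow> m \<in> carrier M \<Longrightarrow> lift_form f (a \<odot>\<^bsub>M\<^esub> m) = a \<otimes>\<^bsub>A\<^esub> lift_form f m"
proof (induction a arbitrary: m rule: trunc_induct)
  case zero
  then show ?case
    by (simp add: lift_form_zero)
next
  case (add a b)
  then show ?case
    by (simp add: M.smult_l_distr lift_form_add A.l_distr)
next
  case (monom c i)
  then show ?case
    by (simp add: M.smult_assoc1 lift_form_cst lift_form_T_pow A.m_assoc)
qed

lemma lift_form_eq_zeroD:
  assumes "0 < n" "m \<in> carrier M" "lift_form f m = \<zero>\<^bsub>A\<^esub>"
  shows "f m = \<zero>"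
  using trunc_sum_eq_zeroD[of "\<lambda>i. f (T [^]\<^bsub>A\<^esub> (n - Suc i) \<odot>\<^bsub>M\<^esub> m)" "n - 1"] assms
  by (simp add: lift_form_def)

end

lemma lift_forms_module_hom:
  assumes "separating_forms R MR (carrier M) fs"
  shows "(\<lambda>m. \<lambda>j\<in>{..<length fs}. lift_form (fs ! j) m) \<in> module_hom A M (free_module A {..<length fs})"
proof -
  have "linear_form R MR (carrier M) (fs ! j)" if "j < length fs" for j
    using assms that by (simp add: separating_forms_def)
  then show ?thesis
    by (auto simp: module_hom_def free_module_simps lift_form_add lift_form_smult
        intro!: restrict_ext)
qed

lemma lift_forms_eq_zeroD:
  assumes fs: "separating_forms R MR (carrier M) fs" and "0 < n" and m: "m \<in> carrier M"
    and "(\<lambda>j\<in>{..<length fs}. lift_form (fs ! j) m) = \<zero>\<^bsub>free_module A {..<length fs}\<^esub>"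
  shows "m = \<zero>\<^bsub>M\<^esub>"
proof -
  have "(fs ! j) m = \<zero>" if "j < length fs" for j
  proof (rule lift_form_eq_zeroD[OF _ \<open>0 < n\<close> m])
    show "linear_form R MR (carrier M) (fs ! j)"
      using fs that by (simp add: separating_forms_def)
    show "lift_form (fs ! j) m = \<zero>\<^bsub>A\<^esub>"
      using fun_cong[OF assms(4), of j] that by (simp add: free_module_simps)
  qed
  then have "\<forall>f\<in>set fs. f m = \<zero>"
    by (auto simp: in_set_conv_nth)
  with fs m show ?thesis
    by (simp add: separating_forms_def)
qed

theorem embedding_into_free_module:
  assumes "domain R" "0 < n" "torsion_free A M" "finitely_generated_module A M"
  shows "\<exists>I :: nat set. iso_to_submodule A M (free_module A I)"
proof -
  interpret MR: module R MR
    by (rule module_MR)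
  obtain G where G: "set G \<subseteq> carrier MR" "list_span R MR G = carrier M"
    using finite_spanning_list[OF assms(4)] by auto
  obtain fs where fs: "separating_forms R MR (carrier M) fs"
    using MR.separating_forms_exist[OF \<open>domain R\<close> torsion_free_restrict_scalars[OF assms(1,3)] G(1)]
    unfolding G(2) by blast
  have "iso_to_submodule A M (free_module A {..<length fs})"
    using lift_forms_eq_zeroD[OF fs \<open>0 < n\<close>]
    by (rule iso_to_submoduleI[OF module_M module_free_module[OF cring_A] lift_forms_module_hom[OF fs]])
  then show ?thesis
    by blast
qed

end

theorem proposition3p4p1:
  fixes R :: "('a, 'r) ring_scheme" and n :: nat
    and M :: "((nat \<Rightarrow> 'a) set, 'm, 'x) module_scheme"
  assumes "noetherian_domain R"
    and "n \<ge> 1"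
    and "module (trunc_poly_ring R n) M"
    and "finitely_generated_module (trunc_poly_ring R n) M"
  shows "(torsion_free (trunc_poly_ring R n) M \<longrightarrow>
            (\<exists>I :: nat set. iso_to_submodule (trunc_poly_ring R n) M (free_module (trunc_poly_ring R n) I)))
       \<and> (\<forall>I :: 'i set. iso_to_submodule (trunc_poly_ring R n) M (free_module (trunc_poly_ring R n) I)
            \<longrightarrow> torsion_free (trunc_poly_ring R n) M)"
proof -
  have "domain R"
    using assms(1) by (rule noetherian_domain.axioms(2))
  interpret trunc_poly_module R "UP R" n M
    using \<open>domain R\<close> assms(3)
    by (intro trunc_poly_module.intro trunc_poly_module_axioms.intro trunc_poly.intro UP_cring.intro
        domain.axioms(1)) (simp_all add: trunc_poly_ring_def)
  have "0 < n"
    using assms(2) by simp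
  show ?thesis
    unfolding trunc_poly_ring_def
  proof (intro conjI allI impI)
    show "\<exists>I :: nat set. iso_to_submodule A M (free_module A I)" if "torsion_free A M"
      using embedding_into_free_module[OF \<open>domain R\<close> \<open>0 < n\<close> that] assms(4)
      by (simp add: trunc_poly_ring_def)
    show "torsion_free A M" if "iso_to_submodule A M (free_module A I)" for I :: "'i set"
      using torsion_free_if_iso_to_submodule[OF module_M module_free_module[OF cring_A] that
          torsion_free_free_module[OF cring_A]] .
  qed
qed

end
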